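(* Let $f\in C^\infty(\mathbb{T})$ be even and nonnegative with $f(0)=0$ and $f'\ge 0$ on $[0,\pi)$. Then for every $a>0$ and $\sigma>0$, \[ -\int_0^{\pi/2}\frac{H_a f(x)\,f'(x)}{x^{\sigma}}\,dx \;\ge\; C_{a,\sigma}\int_0^{\pi/2}\frac{f(x)^2}{x^{1+\sigma}}\,dx, \] where $C_{a,\sigma}>0$ is a constant depending only on $a$ and $\sigma$ (and not on $f$). If the right-hand side is infinite, the statement means that the left-hand side is infinite as well.
   Context: $\mathbb{T}=[-\pi,\pi)$ is the circle; functions on $\mathbb{T}$ are identified with $2\pi$-periodic functions on $\mathbb{R}$, and $C^\infty(\mathbb{T})$ denotes smooth $2\pi$-periodic functions with all derivatives bounded. For $a>0$, $H_a f(x) := \mathrm{P.V.}\int_{\mathbb{R}} f(x-y)K_a(y)\,dy$ with $K_a(y) := \frac{a^2}{\pi y(y^2+a^2)}$, applied to the periodic extension of $f$. *)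

theory Defs
  imports "HOL-Analysis.Analysis"
begin

definition Kker :: "real \<Rightarrow> real \<Rightarrow> real" where
  "Kker a y = a^2 / (pi * y * (y^2 + a^2))"

definition Hop :: "real \<Rightarrow> (real \<Rightarrow> real) \<Rightarrow> real \<Rightarrow> real" where
  "Hop a f x = Lim (at_right 0)
     (\<lambda>eps. integral {y. eps \<le> \<bar>y\<bar>} (\<lambda>y. f (x - y) * Kker a y))"

definition smooth_real :: "(real \<Rightarrow> real) \<Rightarrow> bool" where
  "smooth_real f \<longleftrightarrow> (\<forall>n x. (deriv ^^ n) f differentiable (at x))"

text \<open>Smooth 2pi-periodic functions, i.e. C-infinity of the circle.\<close>
definition smooth_periodic :: "(real \<Rightarrow> real) \<Rightarrow> bool" where
  "smooth_periodic f \<longleftrightarrow> smooth_real f \<and> (\<forall>x. f (x + 2 * pi) = f x)"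

end

theory Submission
  imports Defs "HOL-Library.Periodic_Fun" "HOL-Probability.Sinc_Integral"
begin

text \<open>
  Since K_a is odd, H_a f(x) = - int_0^oo (f(x+y) - f(x-y)) K_a(y) dy.  For 0 < x <= pi/2 the
  difference D(y) = f(x+y) - f(x-y) is odd, 2pi-periodic and nonnegative on [0, pi], while K_a
  decreases on (0, oo).  Folding the period (2pi k, 2pi k + 2pi] at its midpoint turns its
  contribution into int_0^pi D(y) (K_a(2pi k + y) - K_a(2pi k + 2pi - y)) dy >= 0, and the first
  period alone already gives -H_a f(x) >= c_a (f(x) - Af(x)) with c_a = a^2 / (2pi (4 + a^2)),
  where Af(x) is the mean of f over [0, x].

  Multiplying by f'(x) x^(-sigma) >= 0 reduces the claim to the Hardy-type inequality
  int f^2 x^(-1-sigma) <= C int (f - Af) f' x^(-sigma) over (0, pi/2].  With u = f - Af it follows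
  from f^2 <= 2 (Af)^2 + 2 u^2, from u(x)^2 <= int_0^x 2 u f' (the derivative of u^2 is
  2 u f' - 2 u^2 / x), from Cauchy-Schwarz applied to Af(x) = int_0^x u(s) / s ds, and from
  Tonelli's theorem in the form int_0^b x^(-1-gamma) int_0^x F <= 1/gamma int_0^b F(s) s^(-gamma).
\<close>

section \<open>The kernel\<close>

lemma Kker_minus: "Kker a (- y) = - Kker a y"
  unfolding Kker_def by (simp add: divide_simps)

lemma Kker_antimono:
  assumes "a > 0" "0 < y" "y \<le> z"
  shows "Kker a z \<le> Kker a y"
proof -
  have "0 < pi * y * (y^2 + a^2)" "0 < pi * z * (z^2 + a^2)"
    using assms by (intro mult_pos_pos add_pos_nonneg; simp)+
  moreover have "pi * y * (y^2 + a^2) \<le> pi * z * (z^2 + a^2)"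
    using assms by (intro mult_mono power_mono add_mono) auto
  ultimately show ?thesis
    unfolding Kker_def using assms by (intro divide_left_mono mult_pos_pos add_nonneg_pos) auto
qed

lemma mult_Kker: "y \<noteq> 0 \<Longrightarrow> y * Kker a y = a^2 / (pi * (y^2 + a^2))"
  unfolding Kker_def by simp

lemma abs_mult_Kker_le:
  assumes "a > 0"
  shows "\<bar>y * Kker a y\<bar> \<le> max 1 (a^2) / pi * inverse (1 + y^2)"
proof (cases "y = 0")
  case False
  have "a^2 * (1 + y^2) \<le> max 1 (a^2) * (y^2 + a^2)"
  proof (cases "a^2 \<le> 1")
    case True
    then show ?thesis
      by (simp add: max_def algebra_simps mult_left_le_one_le)
  next
    case False
    then have "a^2 * 1 \<le> a^2 * a^2"
      by (intro mult_left_mono) auto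
    with False show ?thesis
      by (simp add: max_def algebra_simps)
  qed
  then have "a^2 / (y^2 + a^2) \<le> max 1 (a^2) * inverse (1 + y^2)"
    using assms by (simp add: field_simps add_pos_nonneg add_nonneg_pos)
  then have "a^2 / (y^2 + a^2) / pi \<le> max 1 (a^2) / pi * inverse (1 + y^2)"
    by (metis divide_right_mono pi_ge_zero times_divide_eq_left)
  moreover have "\<bar>y * Kker a y\<bar> = a^2 / (y^2 + a^2) / pi"
    using mult_Kker[OF False, of a] by simp
  ultimately show ?thesis
    by simp
qed simp

lemma abs_Kker_le:
  assumes "a > 0" "0 < e" "e \<le> \<bar>y\<bar>"
  shows "\<bar>Kker a y\<bar> \<le> max 1 (a^2) / (pi * e) * inverse (1 + y^2)"
proof -
  have "e * \<bar>Kker a y\<bar> \<le> \<bar>y * Kker a y\<bar>"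
    using assms by (simp add: abs_mult mult_right_mono)
  also have "\<dots> \<le> max 1 (a^2) / pi * inverse (1 + y^2)"
    using abs_mult_Kker_le[OF assms(1)] .
  finally have "\<bar>Kker a y\<bar> \<le> max 1 (a^2) / pi * inverse (1 + y^2) / e"
    using assms(2) by (simp add: le_divide_eq mult.commute)
  then show ?thesis
    by (simp add: field_simps)
qed

lemma Kker_measurable [measurable]: "Kker a \<in> borel_measurable borel"
  unfolding Kker_def by measurable

lemma Kker_diff_reflection_ge:
  assumes "a > 0" "0 < y" "y \<le> x" "x \<le> pi/2"
  shows "a^2 / (2*pi*(4 + a^2)) / x \<le> Kker a y - Kker a (2*pi - y)"
proof -
  define c where "c = a^2 / (2*pi*(4 + a^2))"
  have x: "0 < x" "x \<le> 2"
    using assms pi_half_le_two by linarith+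
  have "2 * (c / x) \<le> a^2 / (pi * x * (x^2 + a^2))"
  proof -
    have "x^2 \<le> 4"
      using power_mono[of x 2 2] x by simp
    then show ?thesis
      unfolding c_def using x assms(1)
      by (simp add: field_simps add_pos_nonneg mult_left_mono)
  qed
  also have "\<dots> = Kker a x"
    unfolding Kker_def ..
  also have "\<dots> \<le> Kker a y"
    using Kker_antimono assms by blast
  finally have lower: "2 * (c / x) \<le> Kker a y" .
  have "4 \<le> 2*pi - y"
    using assms pi_gt3 by linarith
  then have "Kker a (2*pi - y) \<le> Kker a 4"
    using Kker_antimono[OF assms(1)] by simp
  also have "\<dots> \<le> a^2 / (4 * pi * (4 + a^2))"
    unfolding Kker_def using assms(1)
    by (intro divide_left_mono mult_left_mono) (auto intro!: mult_pos_pos add_pos_nonneg)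
  also have "\<dots> = c / 2"
    unfolding c_def by simp
  also have "\<dots> \<le> c / x"
    unfolding c_def using x assms(1)
    by (intro divide_left_mono) (auto intro!: divide_nonneg_pos add_pos_nonneg)
  finally have "Kker a (2*pi - y) \<le> c / x" .
  with lower show ?thesis
    unfolding c_def by linarith
qed

lemma periodic_continuous_bounded:
  fixes g :: "real \<Rightarrow> 'a::real_normed_vector"
  assumes "continuous_on UNIV g" "\<And>x. g (x + p) = g x" "p > 0"
  shows "bounded (range g)"
proof -
  interpret periodic_fun_simple g p
    by standard (rule assms(2))
  have "range g \<subseteq> g ` {0..p}"
  proof clarify
    fix x
    define n where "n = \<lfloor>x / p\<rfloor>"
    have "of_int n \<le> x / p" "x / p < of_int n + 1"
      unfolding n_def by linarith+
    then have "x - of_int n * p \<in> {0..p}"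
      using assms(3) by (auto simp: field_simps)
    moreover have "g (x - of_int n * p) = g x"
      by (rule minus_of_int)
    ultimately show "g x \<in> g ` {0..p}"
      by (metis image_eqI)
  qed
  moreover have "bounded (g ` {0..p})"
    by (intro compact_imp_bounded compact_continuous_image continuous_on_subset[OF assms(1)]) auto
  ultimately show ?thesis
    by (rule bounded_subset[rotated])
qed

lemma lipschitz_on_UNIV_of_deriv_bound:
  fixes f :: "real \<Rightarrow> real"
  assumes "\<And>t. (f has_real_derivative f' t) (at t)" "\<And>t. \<bar>f' t\<bar> \<le> M"
  shows "M-lipschitz_on UNIV f"
proof (rule lipschitz_onI)
  show "dist (f s) (f t) \<le> M * dist s t" for s t
    using field_differentiable_bound[of UNIV f f' M s t] assms
    by (simp add: dist_norm has_field_derivative_at_within)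
  show "0 \<le> M"
    using assms(2) abs_ge_zero order_trans by blast
qed

lemma smooth_periodic_has_deriv:
  "smooth_periodic f \<Longrightarrow> (f has_real_derivative deriv f x) (at x)"
  using funpow_0[of deriv f] unfolding smooth_periodic_def smooth_real_def
  by (metis DERIV_deriv_iff_real_differentiable)

lemma smooth_periodic_continuous_deriv:
  "smooth_periodic f \<Longrightarrow> continuous_on UNIV (deriv f)"
proof -
  assume "smooth_periodic f"
  then have "\<And>x. (deriv ^^ 1) f differentiable (at x)"
    unfolding smooth_periodic_def smooth_real_def by blast
  then show ?thesis
    by (simp add: continuous_at_imp_continuous_on differentiable_imp_continuous_within)
qed

lemma smooth_periodic_deriv_periodic:
  assumes "smooth_periodic f"
  shows "deriv f (x + 2*pi) = deriv f x"
proof -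
  have "((\<lambda>t. f (t + 2*pi)) has_real_derivative deriv f (x + 2*pi)) (at x)"
    using DERIV_chain2[OF smooth_periodic_has_deriv[OF assms] DERIV_add[OF DERIV_ident DERIV_const]]
    by simp
  moreover have "(\<lambda>t. f (t + 2*pi)) = f"
    using assms unfolding smooth_periodic_def by auto
  ultimately show ?thesis
    using DERIV_unique smooth_periodic_has_deriv[OF assms] by metis
qed

lemma smooth_periodic_lipschitz:
  assumes "smooth_periodic f"
  obtains L where "L-lipschitz_on UNIV f"
proof -
  have "bounded (range (deriv f))"
    using assms by (intro periodic_continuous_bounded[where p="2*pi"]
        smooth_periodic_continuous_deriv smooth_periodic_deriv_periodic) auto
  then obtain M where "\<And>t. \<bar>deriv f t\<bar> \<le> M"
    unfolding bounded_iff by auto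
  with smooth_periodic_has_deriv[OF assms] show ?thesis
    using lipschitz_on_UNIV_of_deriv_bound that by blast
qed

lemma mono_on_of_deriv_nonneg:
  fixes f :: "real \<Rightarrow> real"
  assumes "\<And>t. (f has_real_derivative f' t) (at t)" "\<And>t. a < t \<Longrightarrow> t < b \<Longrightarrow> 0 \<le> f' t"
  shows "mono_on {a..b} f"
proof (rule mono_onI)
  fix s t assume "s \<in> {a..b}" "t \<in> {a..b}" "s \<le> t"
  then show "f s \<le> f t"
    using assms by (intro DERIV_nonneg_imp_increasing_open[OF \<open>s \<le> t\<close>]
        continuous_at_imp_continuous_on DERIV_isCont ballI) force+
qed

lemma integrable_inverse_1_plus_square_lborel: "integrable lborel (\<lambda>y::real. inverse (1 + y^2))"
  using integrable_inverse_1_plus_square by (simp add: set_integrable_def)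

lemma integrable_imp_set_integrable:
  fixes f :: "_ \<Rightarrow> _ :: {banach, second_countable_topology}"
  shows "integrable M f \<Longrightarrow> A \<in> sets M \<Longrightarrow> set_integrable M A f"
  unfolding set_integrable_def by (rule integrable_mult_indicator)

lemma set_lborel_integral_real_affine:
  fixes g :: "real \<Rightarrow> real"
  assumes "c \<noteq> 0"
  shows "(LBINT x:S. g x) = \<bar>c\<bar> * (LBINT x:{x. t + c * x \<in> S}. g (t + c * x))"
  unfolding set_lebesgue_integral_def
  by (subst lborel_integral_real_affine[OF assms, where t=t])
     (auto intro!: Bochner_Integration.integral_cong split: split_indicator)

lemma set_integral_nonneg:
  fixes g :: "'a \<Rightarrow> real"
  shows "(\<And>x. x \<in> A \<Longrightarrow> 0 \<le> g x) \<Longrightarrow> 0 \<le> (LINT x:A|M. g x)"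
  unfolding set_lebesgue_integral_def
  by (intro Bochner_Integration.integral_nonneg) (simp add: indicator_def)

lemma set_integral_reflect_eq_integral:
  fixes f :: "real \<Rightarrow> real"
  assumes "continuous_on {0..x} f"
  shows "(LBINT y:{0<..x}. f (x - y)) = integral {0..x} f"
proof -
  have "{y. x + -1 * y \<in> {0..x}} = {0..x}"
    by auto
  then have "(LBINT z:{0..x}. f z) = (LBINT y:{0..x}. f (x - y))"
    using set_lborel_integral_real_affine[of "-1" "{0..x}" f x] by simp
  also have "\<dots> = (LBINT y:{0<..x}. f (x - y))"
    by (rule set_integral_discrete_difference[where X="{0}"]) auto
  finally show ?thesis
    using set_borel_integral_eq_integral(2)[OF borel_integrable_atLeastAtMost'[OF assms]] by simp
qed

lemma tendsto_set_integral_atLeast_at_right: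
  fixes g :: "real \<Rightarrow> real"
  assumes "integrable lborel g" "\<And>y. \<bar>g y\<bar> \<le> B"
  shows "((\<lambda>e. LBINT y:{e..}. g y) \<longlongrightarrow> (LBINT y:{0<..}. g y)) (at_right 0)"
proof -
  have bound: "\<bar>(LBINT y:{0<..}. g y) - (LBINT y:{e..}. g y)\<bar> \<le> B * e" if "e > 0" for e
  proof -
    have "(LBINT y:{0<..<e} \<union> {e..}. g y) = (LBINT y:{0<..<e}. g y) + (LBINT y:{e..}. g y)"
      by (intro set_integral_Un integrable_imp_set_integrable[OF assms(1)]) auto
    moreover have "{0<..<e} \<union> {e..} = {0<..}"
      using that by auto
    ultimately have "(LBINT y:{0<..}. g y) - (LBINT y:{e..}. g y) = (LBINT y:{0<..<e}. g y)"
      by simp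
    also have "\<bar>\<dots>\<bar> \<le> (LBINT y:{0<..<e}. \<bar>g y\<bar>)"
      using set_integral_norm_bound[OF integrable_imp_set_integrable[OF assms(1), of "{0<..<e}"]] by simp
    also have "\<dots> \<le> (LBINT y:{0<..<e}. B)"
    proof (rule set_integral_mono)
      show "set_integrable lborel {0<..<e} (\<lambda>y. \<bar>g y\<bar>)"
        using integrable_imp_set_integrable[OF assms(1), of "{0<..<e}"] by (simp add: set_integrable_abs)
      show "set_integrable lborel {0<..<e} (\<lambda>y. B)"
        using that by (simp add: set_integrable_def emeasure_lborel_Ioo integrable_real_indicator)
    qed (rule assms(2))
    also have "\<dots> = B * e"
      using that by (simp add: set_integral_const)
    finally show ?thesis .
  qed
  have "((\<lambda>e. (LBINT y:{0<..}. g y) - (LBINT y:{e..}. g y)) \<longlongrightarrow> 0) (at_right 0)"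
  proof (rule Lim_null_comparison)
    show "\<forall>\<^sub>F e in at_right 0. norm ((LBINT y:{0<..}. g y) - (LBINT y:{e..}. g y)) \<le> B * e"
      using bound by (intro eventually_at_rightI[of 0 1]) auto
    show "((\<lambda>e. B * e) \<longlongrightarrow> 0) (at_right 0)"
      using tendsto_mult_right_zero[OF tendsto_ident_at[of 0 "{0<..}"], of B] by simp
  qed
  from tendsto_diff[OF tendsto_const[of "LBINT y:{0<..}. g y"] this] show ?thesis
    by simp
qed

lemma set_integral_fold_at_midpoint:
  fixes g :: "real \<Rightarrow> real"
  assumes int: "integrable lborel g" and "0 < p"
  shows "(LBINT y:{c<..c + 2*p}. g y) = (LBINT y:{0<..<p}. g (c + y) + g (c + 2*p - y))"
proof -
  have int1: "integrable lborel (\<lambda>y. g (c + y))"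
    using lborel_integrable_real_affine[OF int, of 1 c] by simp
  have int2: "integrable lborel (\<lambda>y. g (c + 2*p - y))"
    using lborel_integrable_real_affine[OF int, of "-1" "c + 2*p"] by simp
  have "{c<..c + 2*p} = {c<..<c + p} \<union> {c + p..c + 2*p}"
    using \<open>0 < p\<close> by (subst ivl_disj_un_two(5)) auto
  moreover have "(LBINT y:{c<..<c + p} \<union> {c + p..c + 2*p}. g y)
      = (LBINT y:{c<..<c + p}. g y) + (LBINT y:{c + p..c + 2*p}. g y)"
    by (intro set_integral_Un integrable_imp_set_integrable[OF int]) auto
  ultimately have "(LBINT y:{c<..c + 2*p}. g y) = (LBINT y:{c<..<c + p}. g y) + (LBINT y:{c + p..c + 2*p}. g y)"
    by simp
  also have "(LBINT y:{c<..<c + p}. g y) = (LBINT y:{0<..<p}. g (c + y))"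
  proof -
    have "{y. c + 1 * y \<in> {c<..<c + p}} = {0<..<p}"
      by auto
    then show ?thesis
      using set_lborel_integral_real_affine[of 1 "{c<..<c + p}" g c] by simp
  qed
  also have "(LBINT y:{c + p..c + 2*p}. g y) = (LBINT y:{0..p}. g (c + 2*p - y))"
  proof -
    have "{y. c + 2*p + -1 * y \<in> {c + p..c + 2*p}} = {0..p}"
      by auto
    then show ?thesis
      using set_lborel_integral_real_affine[of "-1" "{c + p..c + 2*p}" g "c + 2*p"] by simp
  qed
  also have "\<dots> = (LBINT y:{0<..<p}. g (c + 2*p - y))"
    by (rule set_integral_discrete_difference[where X="{0, p}"]) auto
  also have "(LBINT y:{0<..<p}. g (c + y)) + (LBINT y:{0<..<p}. g (c + 2*p - y))
      = (LBINT y:{0<..<p}. g (c + y) + g (c + 2*p - y))"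
    by (intro set_integral_add(2)[symmetric] integrable_imp_set_integrable int1 int2) auto
  finally show ?thesis .
qed

lemma period_integral_odd_periodic:
  fixes D K :: "real \<Rightarrow> real" and k :: nat
  assumes per: "\<And>y. D (y + 2*pi) = D y" and odd: "\<And>y. D (- y) = - D y"
    and int: "integrable lborel (\<lambda>y. D y * K y)"
  shows "(LBINT y:{2*pi*k<..2*pi*k + 2*pi}. D y * K y)
    = (LBINT y:{0<..<pi}. D y * (K (2*pi*k + y) - K (2*pi*k + 2*pi - y)))"
proof -
  interpret periodic_fun_simple D "2*pi"
    by standard (rule per)
  have shift: "D (2*pi*k + y) = D y" for y
    using plus_of_nat[of y k] by (simp add: algebra_simps)
  have reflect: "D (2*pi*k + 2*pi - y) = - D y" for y
    using shift[of "2*pi - y"] plus_1[of "- y"] odd[of y] by (simp add: algebra_simps)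
  have "D (2*pi*k + y) * K (2*pi*k + y) + D (2*pi*k + 2*pi - y) * K (2*pi*k + 2*pi - y)
      = D y * (K (2*pi*k + y) - K (2*pi*k + 2*pi - y))" for y
    unfolding shift reflect by (simp add: algebra_simps)
  then show ?thesis
    using set_integral_fold_at_midpoint[OF int pi_gt_zero, of "2*pi*k"] by simp
qed

lemma set_integral_greaterThan_nonneg_of_periods:
  fixes g :: "real \<Rightarrow> real"
  assumes int: "integrable lborel g" and "p > 0"
    and periods: "\<And>k. m \<le> k \<Longrightarrow> 0 \<le> (LBINT y:{p * real k<..p * real k + p}. g y)"
  shows "0 \<le> (LBINT y:{p * real m<..}. g y)"
proof -
  define A where "A N = {p * real m<..p * real (m + N)}" for N
  have "incseq A"
    by (rule incseq_SucI) (use \<open>p > 0\<close> in \<open>auto simp: A_def algebra_simps\<close>)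
  moreover have "(\<Union>N. A N) = {p * real m<..}"
  proof (intro equalityI subsetI)
    fix y assume y: "y \<in> {p * real m<..}"
    obtain N :: nat where "y / p - real m \<le> real N"
      using real_arch_simple by blast
    then have "y \<le> p * real (m + N)"
      using \<open>p > 0\<close> by (simp add: pos_divide_le_eq algebra_simps)
    with y show "y \<in> (\<Union>N. A N)"
      unfolding A_def by auto
  qed (auto simp: A_def)
  ultimately have "(\<lambda>N. LBINT y:A N. g y) \<longlonglongrightarrow> (LBINT y:{p * real m<..}. g y)"
    using set_integral_cont_up[of A lborel g] integrable_imp_set_integrable[OF int] by (simp add: A_def)
  moreover have "0 \<le> (LBINT y:A N. g y)" for N
  proof (induction N)
    case 0
    then show ?case
      by (simp add: A_def set_lebesgue_integral_def)
  next
    case (Suc N)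
    have "A N \<union> {p * real (m + N)<..p * real (m + N) + p} = A (Suc N)"
      unfolding A_def using \<open>p > 0\<close> by (subst ivl_disj_un_two(6)) (auto simp: algebra_simps)
    moreover have "(LBINT y:A N \<union> {p * real (m + N)<..p * real (m + N) + p}. g y)
        = (LBINT y:A N. g y) + (LBINT y:{p * real (m + N)<..p * real (m + N) + p}. g y)"
      by (intro set_integral_Un integrable_imp_set_integrable[OF int]) (auto simp: A_def)
    ultimately have "(LBINT y:A (Suc N). g y)
        = (LBINT y:A N. g y) + (LBINT y:{p * real (m + N)<..p * real (m + N) + p}. g y)"
      by simp
    then show ?case
      using Suc periods[of "m + N"] by simp
  qed
  ultimately show ?thesis
    by (intro LIMSEQ_le_const) auto
qed

section \<open>The principal value as an integral over the positive half-line\<close>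

lemma abs_odd_part_Kker_le:
  assumes "a > 0" "L-lipschitz_on UNIV f"
  shows "\<bar>(f (x + y) - f (x - y)) * Kker a y\<bar> \<le> 2 * L * max 1 (a^2) / pi * inverse (1 + y^2)"
proof -
  have "\<bar>f (x + y) - f (x - y)\<bar> \<le> L * \<bar>2 * y\<bar>"
    using lipschitz_onD[OF assms(2), of "x + y" "x - y"] by (simp add: dist_real_def)
  then have "\<bar>(f (x + y) - f (x - y)) * Kker a y\<bar> \<le> 2 * L * \<bar>y * Kker a y\<bar>"
    by (auto simp: abs_mult mult.assoc intro: order_trans[OF mult_right_mono])
  also have "\<dots> \<le> 2 * L * (max 1 (a^2) / pi * inverse (1 + y^2))"
    using abs_mult_Kker_le[OF assms(1)] lipschitz_on_nonneg[OF assms(2)]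
    by (intro mult_left_mono) auto
  finally show ?thesis
    by simp
qed

lemma integrable_odd_part_Kker:
  assumes "a > 0" "L-lipschitz_on UNIV f"
  shows "integrable lborel (\<lambda>y. (f (x + y) - f (x - y)) * Kker a y)"
proof (rule Bochner_Integration.integrable_bound)
  show "integrable lborel (\<lambda>y. 2 * L * max 1 (a^2) / pi * inverse (1 + y^2))"
    using integrable_inverse_1_plus_square_lborel by simp
  have [measurable]: "f \<in> borel_measurable borel"
    using assms(2) by (intro borel_measurable_continuous_onI lipschitz_on_continuous_on)
  show "(\<lambda>y. (f (x + y) - f (x - y)) * Kker a y) \<in> borel_measurable lborel"
    by measurable
  show "AE y in lborel. norm ((f (x + y) - f (x - y)) * Kker a y)
      \<le> norm (2 * L * max 1 (a^2) / pi * inverse (1 + y^2))"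
    unfolding real_norm_def by (intro AE_I2 order_trans[OF abs_odd_part_Kker_le[OF assms] abs_ge_self])
qed

lemma set_integrable_Kker_away_from_0:
  assumes "a > 0" "e > 0" "L-lipschitz_on UNIV h"
  shows "set_integrable lborel {y. e \<le> \<bar>y\<bar>} (\<lambda>y. h y * Kker a y)"
proof (rule set_integrable_bound)
  define C where "C = max 1 (a^2) / pi"
  show "set_integrable lborel {y. e \<le> \<bar>y\<bar>} (\<lambda>y. (\<bar>h 0\<bar> * C / e + L * C) * inverse (1 + y^2))"
    using integrable_inverse_1_plus_square_lborel by (intro integrable_imp_set_integrable) auto
  have [measurable]: "h \<in> borel_measurable borel"
    using assms(3) by (intro borel_measurable_continuous_onI lipschitz_on_continuous_on)
  show "set_borel_measurable lborel {y. e \<le> \<bar>y\<bar>} (\<lambda>y. h y * Kker a y)"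
    unfolding set_borel_measurable_def by measurable
  have "\<bar>h y * Kker a y\<bar> \<le> (\<bar>h 0\<bar> * C / e + L * C) * inverse (1 + y^2)" if "e \<le> \<bar>y\<bar>" for y
  proof -
    have "\<bar>h y\<bar> \<le> \<bar>h 0\<bar> + L * \<bar>y\<bar>"
      using lipschitz_onD[OF assms(3), of y 0] by (simp add: dist_real_def)
    then have "\<bar>h y * Kker a y\<bar> \<le> \<bar>h 0\<bar> * \<bar>Kker a y\<bar> + L * \<bar>y * Kker a y\<bar>"
      by (auto simp: abs_mult algebra_simps intro: order_trans[OF mult_right_mono])
    also have "\<dots> \<le> \<bar>h 0\<bar> * (C / e * inverse (1 + y^2)) + L * (C * inverse (1 + y^2))"
      using abs_Kker_le[OF assms(1,2) that] abs_mult_Kker_le[OF assms(1), of y]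
        lipschitz_on_nonneg[OF assms(3)]
      unfolding C_def by (intro add_mono mult_left_mono) (auto simp: field_simps)
    finally show ?thesis
      by (simp add: algebra_simps)
  qed
  then show "AE y in lborel. y \<in> {y. e \<le> \<bar>y\<bar>} \<longrightarrow>
      norm (h y * Kker a y) \<le> norm ((\<bar>h 0\<bar> * C / e + L * C) * inverse (1 + y^2))"
    by (intro AE_I2) (auto intro: order_trans[OF _ abs_ge_self])
qed

lemma truncated_integral_Kker_eq:
  assumes "a > 0" "e > 0" "L-lipschitz_on UNIV f"
  shows "integral {y. e \<le> \<bar>y\<bar>} (\<lambda>y. f (x - y) * Kker a y)
    = - (LBINT y:{e..}. (f (x + y) - f (x - y)) * Kker a y)"
proof -
  have lip: "L-lipschitz_on UNIV (\<lambda>y. f (x + c * y))" if "\<bar>c\<bar> = 1" for c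
  proof (rule lipschitz_onI)
    fix s t
    have "dist (f (x + c * s)) (f (x + c * t)) \<le> L * dist (x + c * s) (x + c * t)"
      by (rule lipschitz_onD[OF assms(3)]) auto
    also have "dist (x + c * s) (x + c * t) = dist s t"
      using that by (simp add: dist_real_def abs_mult flip: right_diff_distrib)
    finally show "dist (f (x + c * s)) (f (x + c * t)) \<le> L * dist s t" .
  qed (rule lipschitz_on_nonneg[OF assms(3)])
  have int_minus: "set_integrable lborel {y. e \<le> \<bar>y\<bar>} (\<lambda>y. f (x - y) * Kker a y)"
    using set_integrable_Kker_away_from_0[OF assms(1,2) lip[of "-1"]] by simp
  have int_plus: "set_integrable lborel {y. e \<le> \<bar>y\<bar>} (\<lambda>y. f (x + y) * Kker a y)"
    using set_integrable_Kker_away_from_0[OF assms(1,2) lip[of 1]] by simp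
  have sub: "{e..} \<subseteq> {y. e \<le> \<bar>y\<bar>}" "{..-e} \<subseteq> {y. e \<le> \<bar>y\<bar>}"
    by auto
  have split: "{y. e \<le> \<bar>y\<bar>} = {e..} \<union> {..-e}"
    by auto
  have "integral {y. e \<le> \<bar>y\<bar>} (\<lambda>y. f (x - y) * Kker a y)
      = (LBINT y:{y. e \<le> \<bar>y\<bar>}. f (x - y) * Kker a y)"
    using set_borel_integral_eq_integral(2)[OF int_minus] by simp
  also have "\<dots> = (LBINT y:{e..}. f (x - y) * Kker a y) + (LBINT y:{..-e}. f (x - y) * Kker a y)"
    unfolding split using assms(2) by (intro set_integral_Un set_integrable_subset[OF int_minus]) auto
  also have "(LBINT y:{..-e}. f (x - y) * Kker a y) = (LBINT y:{e..}. - (f (x + y) * Kker a y))"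
    by (subst set_integral_reflect) (simp add: Kker_minus atLeast_def)
  also have "(LBINT y:{e..}. f (x - y) * Kker a y) + (LBINT y:{e..}. - (f (x + y) * Kker a y))
      = (LBINT y:{e..}. f (x - y) * Kker a y - f (x + y) * Kker a y)"
    using set_integral_diff(2)[OF set_integrable_subset[OF int_minus _ sub(1)]
        set_integrable_subset[OF int_plus _ sub(1)]]
      set_integral_uminus[OF set_integrable_subset[OF int_plus _ sub(1)]] by simp
  also have "\<dots> = (LBINT y:{e..}. - ((f (x + y) - f (x - y)) * Kker a y))"
    by (simp add: algebra_simps)
  also have "\<dots> = - (LBINT y:{e..}. (f (x + y) - f (x - y)) * Kker a y)"
    by (simp add: set_lebesgue_integral_def)
  finally show ?thesis .
qed

lemma Hop_eq_odd_part_integral: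
  assumes "a > 0" "L-lipschitz_on UNIV f"
  shows "Hop a f x = - (LBINT y:{0<..}. (f (x + y) - f (x - y)) * Kker a y)"
proof -
  let ?g = "\<lambda>y. (f (x + y) - f (x - y)) * Kker a y"
  have "\<bar>?g y\<bar> \<le> 2 * L * max 1 (a^2) / pi" for y
  proof -
    have "inverse (1 + y^2) \<le> 1" "0 \<le> 2 * L * max 1 (a^2) / pi"
      using lipschitz_on_nonneg[OF assms(2)] by (auto simp: inverse_le_1_iff)
    then show ?thesis
      using abs_odd_part_Kker_le[OF assms, of x y] by (metis mult_left_le order_trans)
  qed
  then have "((\<lambda>e. - (LBINT y:{e..}. ?g y)) \<longlongrightarrow> - (LBINT y:{0<..}. ?g y)) (at_right 0)"
    by (intro tendsto_minus tendsto_set_integral_atLeast_at_right integrable_odd_part_Kker[OF assms])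
  then have "((\<lambda>e. integral {y. e \<le> \<bar>y\<bar>} (\<lambda>y. f (x - y) * Kker a y))
      \<longlongrightarrow> - (LBINT y:{0<..}. ?g y)) (at_right 0)"
    using truncated_integral_Kker_eq[OF assms(1) _ assms(2)]
    by (elim Lim_transform_eventually) (auto intro: eventually_at_rightI[of 0 1])
  then show ?thesis
    unfolding Hop_def by (rule tendsto_Lim[rotated]) simp
qed

section \<open>A pointwise lower bound for -H_a f\<close>

definition hardy_mean :: "(real \<Rightarrow> real) \<Rightarrow> real \<Rightarrow> real" where
  "hardy_mean f x = integral {0..x} f / x"

definition hardy_dev :: "(real \<Rightarrow> real) \<Rightarrow> real \<Rightarrow> real" where
  "hardy_dev f x = f x - hardy_mean f x"

lemma set_integral_hardy_dev:
  fixes f :: "real \<Rightarrow> real"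
  assumes "continuous_on {0..x} f" "0 < x"
  shows "(LBINT y:{0<..x}. f x - f (x - y)) = x * hardy_dev f x"
proof -
  have "set_integrable lborel {0<..x} (\<lambda>y. f (x - y))"
    by (rule set_integrable_subset[OF borel_integrable_atLeastAtMost'[of 0 x]])
      (use assms in \<open>auto intro!: continuous_intros continuous_on_compose2[OF assms(1)]\<close>)
  then have "(LBINT y:{0<..x}. f x - f (x - y)) = x * f x - (LBINT y:{0<..x}. f (x - y))"
    using assms by (simp add: set_integral_diff set_integral_const
        set_integrable_def emeasure_lborel_Ioc integrable_real_indicator)
  also have "(LBINT y:{0<..x}. f (x - y)) = integral {0..x} f"
    by (rule set_integral_reflect_eq_integral[OF assms(1)])
  finally show ?thesis
    using assms unfolding hardy_dev_def hardy_mean_def by (simp add: right_diff_distrib)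
qed

lemma even_periodic_diff_nonneg:
  fixes f :: "real \<Rightarrow> real"
  assumes per: "\<And>t. f (t + 2*pi) = f t" and even: "\<And>t. f (- t) = f t"
    and mono: "mono_on {0..pi} f"
    and "0 \<le> x" "x \<le> pi" "0 \<le> y" "y \<le> pi"
  shows "f (x - y) \<le> f (x + y)"
proof -
  have abs: "f (x - y) = f \<bar>x - y\<bar>"
    using even[of "x - y"] by (simp add: abs_if)
  show ?thesis
  proof (cases "x + y \<le> pi")
    case True
    then show ?thesis
      unfolding abs using assms(4-) by (intro mono_onD[OF mono]) auto
  next
    case False
    have "f (x + y) = f (2*pi - (x + y))"
      using per[of "- (x + y)"] even[of "x + y"] by (simp add: algebra_simps)
    moreover have "f \<bar>x - y\<bar> \<le> f (2*pi - (x + y))"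
      using False assms(4-) by (intro mono_onD[OF mono]) auto
    ultimately show ?thesis
      unfolding abs by simp
  qed
qed

context
  fixes f :: "real \<Rightarrow> real" and L :: real
  assumes lip: "L-lipschitz_on UNIV f" and per: "\<And>t. f (t + 2*pi) = f t"
    and even: "\<And>t. f (- t) = f t" and mono: "mono_on {0..pi} f"
begin

lemma odd_part_mult_Kker_diff_ge:
  assumes "a > 0" "0 < y" "y \<le> x" "x \<le> pi/2"
  shows "a^2 / (2*pi*(4 + a^2)) / x * (f x - f (x - y))
    \<le> (f (x + y) - f (x - y)) * (Kker a y - Kker a (2*pi - y))"
proof -
  have "0 \<le> f x - f (x - y)" "f x - f (x - y) \<le> f (x + y) - f (x - y)"
    using assms by (auto intro!: mono_onD[OF mono])
  moreover have "a^2 / (2*pi*(4 + a^2)) / x \<le> Kker a y - Kker a (2*pi - y)"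
    using Kker_diff_reflection_ge assms by blast
  moreover have "0 \<le> a^2 / (2*pi*(4 + a^2)) / x"
    using assms by simp
  ultimately show ?thesis
    by (metis mult.commute mult_mono order_trans)
qed

lemma first_period_integral_ge:
  assumes "a > 0" "0 < x" "x \<le> pi/2"
  shows "a^2 / (2*pi*(4 + a^2)) * hardy_dev f x
    \<le> (LBINT y:{0<..<pi}. (f (x + y) - f (x - y)) * (Kker a y - Kker a (2*pi - y)))"
proof -
  define c where "c = a^2 / (2*pi*(4 + a^2))"
  let ?D = "\<lambda>y. f (x + y) - f (x - y)"
  let ?h = "\<lambda>y. ?D y * (Kker a y - Kker a (2*pi - y))"
  have int: "integrable lborel (\<lambda>y. ?D y * Kker a y)"
    by (rule integrable_odd_part_Kker[OF assms(1) lip])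
  have "?h y = ?D y * Kker a y + ?D (2*pi + -1 * y) * Kker a (2*pi + -1 * y)" for y
    using per[of "x - y"] per[of "x + y - 2*pi"] by (simp add: algebra_simps)
  then have int_h: "integrable lborel ?h"
    using Bochner_Integration.integrable_add[OF int lborel_integrable_real_affine[OF int, of "-1" "2*pi"]]
    by simp
  have D_nonneg: "0 \<le> ?D y" if "0 \<le> y" "y \<le> pi" for y
    using even_periodic_diff_nonneg[OF per even mono, of x y] that assms by simp
  have cont: "continuous_on A f" for A
    using lipschitz_on_continuous_on[OF lip] continuous_on_subset by blast
  have "{0<..x} \<union> {x<..<pi} = {0<..<pi}"
    using assms by (intro ivl_disj_un_two(2)) auto
  moreover have "(LBINT y:{0<..x} \<union> {x<..<pi}. ?h y) = (LBINT y:{0<..x}. ?h y) + (LBINT y:{x<..<pi}. ?h y)"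
    by (intro set_integral_Un integrable_imp_set_integrable[OF int_h]) auto
  ultimately have "(LBINT y:{0<..<pi}. ?h y) = (LBINT y:{0<..x}. ?h y) + (LBINT y:{x<..<pi}. ?h y)"
    by simp
  moreover have "0 \<le> (LBINT y:{x<..<pi}. ?h y)"
    using D_nonneg Kker_antimono[OF assms(1)] assms by (intro set_integral_nonneg mult_nonneg_nonneg) auto
  moreover have "(LBINT y:{0<..x}. c / x * (f x - f (x - y))) \<le> (LBINT y:{0<..x}. ?h y)"
  proof (rule set_integral_mono)
    show "set_integrable lborel {0<..x} (\<lambda>y. c / x * (f x - f (x - y)))"
      by (rule set_integrable_subset[OF borel_integrable_atLeastAtMost'[of 0 x]])
        (use assms in \<open>auto intro!: continuous_intros continuous_on_compose2[OF cont]\<close>)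
    show "set_integrable lborel {0<..x} ?h"
      by (rule integrable_imp_set_integrable[OF int_h]) simp
  qed (use odd_part_mult_Kker_diff_ge assms in \<open>auto simp: c_def\<close>)
  moreover have "(LBINT y:{0<..x}. c / x * (f x - f (x - y))) = c * hardy_dev f x"
    using set_integral_hardy_dev[OF cont assms(2)] assms by (simp add: set_integral_mult_right)
  ultimately show ?thesis
    unfolding c_def by linarith
qed

lemma neg_Hop_ge_hardy_dev:
  assumes "a > 0" "0 < x" "x \<le> pi/2"
  shows "a^2 / (2*pi*(4 + a^2)) * hardy_dev f x \<le> - Hop a f x"
proof -
  let ?D = "\<lambda>y. f (x + y) - f (x - y)"
  let ?g = "\<lambda>y. ?D y * Kker a y"
  have int: "integrable lborel ?g"
    by (rule integrable_odd_part_Kker[OF assms(1) lip])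
  have D_per: "?D (y + 2*pi) = ?D y" for y
    using per[of "x + y"] per[of "x - y - 2*pi"] by (simp add: algebra_simps)
  have D_odd: "?D (- y) = - ?D y" for y
    by simp
  have D_nonneg: "0 \<le> ?D y" if "0 < y" "y < pi" for y
    using even_periodic_diff_nonneg[OF per even mono, of x y] that assms by simp
  have K_anti: "Kker a (2*pi*real k + 2*pi - y) \<le> Kker a (2*pi*real k + y)"
    if "0 < y" "y < pi" for y k
    using that by (intro Kker_antimono[OF assms(1)] add_nonneg_pos) auto
  have "0 \<le> (LBINT y:{2*pi*real k<..2*pi*real k + 2*pi}. ?g y)" for k
    unfolding period_integral_odd_periodic[OF D_per D_odd int]
    using D_nonneg K_anti by (intro set_integral_nonneg mult_nonneg_nonneg) auto
  then have tail: "0 \<le> (LBINT y:{2*pi*real 1<..}. ?g y)"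
    by (intro set_integral_greaterThan_nonneg_of_periods[OF int]) auto
  have "{0<..2*pi} \<union> {2*pi<..} = {0<..}"
    by (intro ivl_disj_un_one(5)) simp
  moreover have "(LBINT y:{0<..2*pi} \<union> {2*pi<..}. ?g y) = (LBINT y:{0<..2*pi}. ?g y) + (LBINT y:{2*pi<..}. ?g y)"
    by (intro set_integral_Un integrable_imp_set_integrable[OF int]) auto
  moreover have "(LBINT y:{0<..2*pi}. ?g y) = (LBINT y:{0<..<pi}. ?D y * (Kker a y - Kker a (2*pi - y)))"
    using period_integral_odd_periodic[OF D_per D_odd int, of 0] by simp
  ultimately show ?thesis
    using tail first_period_integral_ge[OF assms] Hop_eq_odd_part_integral[OF assms(1) lip, of x]
    by simp
qed

end

section \<open>A Hardy-type inequality\<close>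

lemma diff_le_integral_of_deriv_le:
  fixes \<phi> \<phi>' \<psi> :: "real \<Rightarrow> real"
  assumes "e \<le> x"
    and deriv: "\<And>s. s \<in> {e..x} \<Longrightarrow> (\<phi> has_real_derivative \<phi>' s) (at s)"
    and le: "\<And>s. s \<in> {e..x} \<Longrightarrow> \<phi>' s \<le> \<psi> s"
    and cont: "continuous_on {e..x} \<psi>"
  shows "\<phi> x - \<phi> e \<le> integral {e..x} \<psi>"
proof -
  have "(\<phi>' has_integral (\<phi> x - \<phi> e)) {e..x}"
  proof (rule fundamental_theorem_of_calculus[OF \<open>e \<le> x\<close>])
    fix s assume "s \<in> {e..x}"
    then show "(\<phi> has_vector_derivative \<phi>' s) (at s within {e..x})"
      using deriv by (simp add: has_real_derivative_iff_has_vector_derivative has_vector_derivative_at_within)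
  qed
  moreover have "(\<psi> has_integral integral {e..x} \<psi>) {e..x}"
    using cont by (intro integrable_integral integrable_continuous_interval)
  ultimately show ?thesis
    using le by (elim has_integral_le) auto
qed

lemma ennreal_le_nn_integral_of_deriv_le:
  fixes \<phi> \<phi>' \<psi> :: "real \<Rightarrow> real"
  assumes "0 < x"
    and deriv: "\<And>s. 0 < s \<Longrightarrow> s \<le> x \<Longrightarrow> (\<phi> has_real_derivative \<phi>' s) (at s)"
    and le: "\<And>s. 0 < s \<Longrightarrow> s \<le> x \<Longrightarrow> \<phi>' s \<le> \<psi> s"
    and nonneg: "\<And>s. 0 < s \<Longrightarrow> s \<le> x \<Longrightarrow> 0 \<le> \<psi> s"
    and cont: "continuous_on {0<..x} \<psi>"
    and lim: "(\<phi> \<longlongrightarrow> 0) (at_right 0)"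
  shows "ennreal (\<phi> x) \<le> (\<integral>\<^sup>+ s\<in>{0<..x}. ennreal (\<psi> s) \<partial>lborel)"
proof (cases "(\<integral>\<^sup>+ s\<in>{0<..x}. ennreal (\<psi> s) \<partial>lborel)")
  case (real N)
  have "\<phi> x - \<phi> e \<le> N" if e: "0 < e" "e < x" for e
  proof -
    have diff: "\<phi> x - \<phi> e \<le> integral {e..x} \<psi>"
      using e deriv le by (intro diff_le_integral_of_deriv_le[of e x \<phi> \<phi>'] continuous_on_subset[OF cont]) auto
    have "ennreal (integral {e..x} \<psi>) = (\<integral>\<^sup>+ s\<in>{e..x}. ennreal (\<psi> s) \<partial>lborel)"
      using e nonneg by (intro nn_integral_has_integral_lebesgue'[symmetric] integrable_integral
          integrable_continuous_interval continuous_on_subset[OF cont]) auto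
    also have "\<dots> \<le> ennreal N"
      unfolding real(2)[symmetric] using e by (intro nn_integral_mono) (auto split: split_indicator)
    finally have "integral {e..x} \<psi> \<le> N"
      using real(1) by simp
    with diff show ?thesis
      by linarith
  qed
  then have "\<phi> x - 0 \<le> N"
    by (intro tendsto_upperbound[OF tendsto_diff[OF tendsto_const lim]] eventually_at_rightI[of 0 x])
      (use \<open>0 < x\<close> in auto)
  then show ?thesis
    using real by (simp add: ennreal_leI)
qed simp

lemma nn_integral_powr_tail_le:
  assumes "0 < s" "0 < \<gamma>"
  shows "(\<integral>\<^sup>+ x\<in>{s..b}. ennreal (x powr (-1-\<gamma>)) \<partial>lborel) \<le> ennreal (1/\<gamma>) * ennreal (s powr (-\<gamma>))"
proof -
  have "(\<integral>\<^sup>+ x\<in>{s..b}. ennreal (x powr (-1-\<gamma>)) \<partial>lborel) \<le> (\<integral>\<^sup>+ x\<in>{s..}. ennreal (x powr (-1-\<gamma>)) \<partial>lborel)"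
    by (intro nn_integral_mono) (auto split: split_indicator)
  also have "\<dots> = ennreal (- (s powr (-1-\<gamma>+1)) / (-1-\<gamma>+1))"
    using has_integral_powr_to_inf[of "-1-\<gamma>" s] assms by (intro nn_integral_has_integral_lebesgue') auto
  also have "\<dots> = ennreal (1/\<gamma>) * ennreal (s powr (-\<gamma>))"
    using assms by (simp add: ennreal_mult'[symmetric] divide_simps)
  finally show ?thesis .
qed

lemma nn_integral_powr_primitive_le:
  fixes F :: "real \<Rightarrow> ennreal" and \<gamma> b :: real
  assumes [measurable]: "F \<in> borel_measurable borel" and "\<gamma> > 0"
  shows "(\<integral>\<^sup>+ x\<in>{0<..b}. ennreal (x powr (-1-\<gamma>)) * (\<integral>\<^sup>+ s\<in>{0<..x}. F s \<partial>lborel) \<partial>lborel)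
    \<le> ennreal (1/\<gamma>) * (\<integral>\<^sup>+ s\<in>{0<..b}. F s * ennreal (s powr (-\<gamma>)) \<partial>lborel)"
proof -
  let ?G = "\<lambda>x. ennreal (x powr (-1-\<gamma>))"
  have [measurable]: "Measurable.pred (borel \<Otimes>\<^sub>M borel) (\<lambda>p::real \<times> real. fst p \<in> {0<..snd p})"
    unfolding greaterThanAtMost_iff by measurable
  have "(\<integral>\<^sup>+ x\<in>{0<..b}. ?G x * (\<integral>\<^sup>+ s\<in>{0<..x}. F s \<partial>lborel) \<partial>lborel)
      = (\<integral>\<^sup>+ x. \<integral>\<^sup>+ s. ?G x * indicator {0<..b} x * (F s * indicator {0<..x} s) \<partial>lborel \<partial>lborel)"
    by (intro nn_integral_cong) (auto simp: nn_integral_cmult[symmetric] mult_ac)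
  also have "\<dots> = (\<integral>\<^sup>+ s. \<integral>\<^sup>+ x. ?G x * indicator {0<..b} x * (F s * indicator {0<..x} s) \<partial>lborel \<partial>lborel)"
    by (intro lborel_pair.Fubini') measurable
  also have "\<dots> = (\<integral>\<^sup>+ s. \<integral>\<^sup>+ x. F s * indicator {0<..b} s * (?G x * indicator {s..b} x) \<partial>lborel \<partial>lborel)"
    by (intro nn_integral_cong) (simp add: mult_ac split: split_indicator)
  also have "\<dots> = (\<integral>\<^sup>+ s. F s * indicator {0<..b} s * (\<integral>\<^sup>+ x\<in>{s..b}. ?G x \<partial>lborel) \<partial>lborel)"
    by (intro nn_integral_cong nn_integral_cmult) measurable
  also have "\<dots> \<le> (\<integral>\<^sup>+ s. ennreal (1/\<gamma>) * (F s * ennreal (s powr (-\<gamma>)) * indicator {0<..b} s) \<partial>lborel)"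
  proof (intro nn_integral_mono)
    fix s
    show "F s * indicator {0<..b} s * (\<integral>\<^sup>+ x\<in>{s..b}. ?G x \<partial>lborel)
      \<le> ennreal (1/\<gamma>) * (F s * ennreal (s powr (-\<gamma>)) * indicator {0<..b} s)"
    proof (cases "s \<in> {0<..b}")
      case True
      then have "F s * (\<integral>\<^sup>+ x\<in>{s..b}. ?G x \<partial>lborel) \<le> F s * (ennreal (1/\<gamma>) * ennreal (s powr (-\<gamma>)))"
        using nn_integral_powr_tail_le[OF _ \<open>\<gamma> > 0\<close>] by (intro mult_left_mono) auto
      with True show ?thesis
        by (simp add: mult_ac)
    qed simp
  qed
  also have "\<dots> = ennreal (1/\<gamma>) * (\<integral>\<^sup>+ s\<in>{0<..b}. F s * ennreal (s powr (-\<gamma>)) \<partial>lborel)"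
    by (intro nn_integral_cmult) measurable
  finally show ?thesis .
qed

lemma nn_integral_le_of_powr_primitive_bound:
  fixes \<Phi> F :: "real \<Rightarrow> ennreal"
  assumes [measurable]: "F \<in> borel_measurable borel" and "0 < \<gamma>"
    and bound: "\<And>x. 0 < x \<Longrightarrow> x \<le> b \<Longrightarrow>
      \<Phi> x \<le> C * (ennreal (x powr (-1-\<gamma>)) * (\<integral>\<^sup>+ s\<in>{0<..x}. F s \<partial>lborel))"
  shows "(\<integral>\<^sup>+ x\<in>{0<..b}. \<Phi> x \<partial>lborel)
    \<le> C * (ennreal (1/\<gamma>) * (\<integral>\<^sup>+ s\<in>{0<..b}. F s * ennreal (s powr (-\<gamma>)) \<partial>lborel))"
proof -
  have [measurable]: "Measurable.pred (borel \<Otimes>\<^sub>M borel) (\<lambda>p::real \<times> real. snd p \<in> {0<..fst p})"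
    unfolding greaterThanAtMost_iff by measurable
  have "(\<integral>\<^sup>+ x\<in>{0<..b}. \<Phi> x \<partial>lborel)
      \<le> (\<integral>\<^sup>+ x. C * (ennreal (x powr (-1-\<gamma>)) * (\<integral>\<^sup>+ s\<in>{0<..x}. F s \<partial>lborel) * indicator {0<..b} x) \<partial>lborel)"
    using bound by (intro nn_integral_mono) (simp add: mult.assoc split: split_indicator)
  also have "\<dots> = C * (\<integral>\<^sup>+ x\<in>{0<..b}. ennreal (x powr (-1-\<gamma>)) * (\<integral>\<^sup>+ s\<in>{0<..x}. F s \<partial>lborel) \<partial>lborel)"
    by (intro nn_integral_cmult) measurable
  also have "\<dots> \<le> C * (ennreal (1/\<gamma>) * (\<integral>\<^sup>+ s\<in>{0<..b}. F s * ennreal (s powr (-\<gamma>)) \<partial>lborel))"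
    using assms(2) by (intro mult_left_mono nn_integral_powr_primitive_le) auto
  finally show ?thesis .
qed

lemma nn_integral_div_sq_le:
  fixes u :: "real \<Rightarrow> real"
  assumes [measurable]: "u \<in> borel_measurable borel"
    and u: "\<And>s. 0 < s \<Longrightarrow> s \<le> x \<Longrightarrow> 0 \<le> u s" and "0 \<le> x" "0 < g"
  shows "(\<integral>\<^sup>+ s\<in>{0<..x}. ennreal (u s / s) \<partial>lborel) ^ 2
    \<le> ennreal (x powr g / g) * (\<integral>\<^sup>+ s\<in>{0<..x}. ennreal ((u s)^2 * s powr (-1-g)) \<partial>lborel)"
proof -
  define F where "F s = ennreal (u s * s powr (- (1 + g) / 2)) * indicator {0<..x} s" for s
  define G where "G s = ennreal (s powr ((g - 1) / 2)) * indicator {0<..x} s" for s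
  have [measurable]: "F \<in> borel_measurable borel" "G \<in> borel_measurable borel"
    unfolding F_def[abs_def] G_def[abs_def] by measurable
  have FG: "F s * G s = ennreal (u s / s) * indicator {0<..x} s" for s
  proof (cases "s \<in> {0<..x}")
    case True
    then have "s powr (- (1 + g) / 2) * s powr ((g - 1) / 2) = 1 / s"
      by (simp add: powr_add[symmetric] powr_minus_divide field_simps)
    with True u[of s] show ?thesis
      unfolding F_def G_def by (simp add: ennreal_mult'[symmetric] field_simps)
  qed (simp add: F_def G_def)
  have F2: "F s ^ 2 = ennreal ((u s)^2 * s powr (-1-g)) * indicator {0<..x} s" for s
  proof (cases "s \<in> {0<..x}")
    case True
    have "(u s * s powr (- (1 + g) / 2))^2 = (u s)^2 * s powr (-1-g)"
      by (simp add: power_mult_distrib power2_eq_square powr_add[symmetric])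
    with True u[of s] show ?thesis
      unfolding F_def by (simp add: ennreal_power power_mult_distrib)
  qed (simp add: F_def)
  have G2: "G s ^ 2 = ennreal (s powr (g - 1)) * indicator {0<..x} s" for s
  proof -
    have "(s powr ((g - 1) / 2))^2 = s powr (g - 1)"
      by (simp add: power2_eq_square powr_add[symmetric])
    then show ?thesis
      unfolding G_def by (simp add: ennreal_power power_mult_distrib indicator_def)
  qed
  have "(\<integral>\<^sup>+ s. G s ^ 2 \<partial>lborel) \<le> (\<integral>\<^sup>+ s\<in>{0..x}. ennreal (s powr (g - 1)) \<partial>lborel)"
    unfolding G2 by (intro nn_integral_mono) (auto split: split_indicator)
  also have "\<dots> = ennreal (x powr g / g)"
    using has_integral_powr_from_0[of "g - 1" x] assms by (intro nn_integral_has_integral_lebesgue') auto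
  finally have G_bound: "(\<integral>\<^sup>+ s. G s ^ 2 \<partial>lborel) \<le> ennreal (x powr g / g)" .
  have "(\<integral>\<^sup>+ s\<in>{0<..x}. ennreal (u s / s) \<partial>lborel) ^ 2 \<le> (\<integral>\<^sup>+ s. F s ^ 2 \<partial>lborel) * (\<integral>\<^sup>+ s. G s ^ 2 \<partial>lborel)"
    unfolding FG[symmetric] by (rule Cauchy_Schwarz_nn_integral) measurable
  also have "\<dots> \<le> (\<integral>\<^sup>+ s. F s ^ 2 \<partial>lborel) * ennreal (x powr g / g)"
    by (intro mult_left_mono G_bound) simp
  finally show ?thesis
    unfolding F2 by (simp add: mult.commute)
qed

locale nondecreasing_from_zero =
  fixes f f' :: "real \<Rightarrow> real" and b :: real
  assumes has_deriv: "\<And>t. (f has_real_derivative f' t) (at t)"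
    and continuous_deriv: "continuous_on UNIV f'"
    and zero: "f 0 = 0"
    and deriv_nonneg: "\<And>t. 0 \<le> t \<Longrightarrow> t \<le> b \<Longrightarrow> 0 \<le> f' t"
    and pos: "0 < b"
begin

lemma f_continuous: "continuous_on A f"
  using has_deriv by (meson DERIV_isCont continuous_at_imp_continuous_on)

lemma f_mono:
  assumes "0 \<le> s" "s \<le> t" "t \<le> b"
  shows "f s \<le> f t"
proof -
  have "mono_on {0..b} f"
    using deriv_nonneg by (intro mono_on_of_deriv_nonneg[OF has_deriv]) auto
  then show ?thesis
    using assms by (simp add: mono_on_def)
qed

lemma f_measurable [measurable]: "f \<in> borel_measurable borel" "f' \<in> borel_measurable borel"
  using borel_measurable_continuous_onI[OF f_continuous] borel_measurable_continuous_onI[OF continuous_deriv]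
  by auto

lemma hardy_mean_bounds:
  assumes "0 < s" "s \<le> b"
  shows "0 \<le> hardy_mean f s" "hardy_mean f s \<le> f s"
proof -
  have int: "f integrable_on {0..s}"
    by (intro integrable_continuous_interval f_continuous)
  have "integral {0..s} f \<le> integral {0..s} (\<lambda>_. f s)"
    using assms by (intro integral_le int) (auto intro: f_mono)
  then show "hardy_mean f s \<le> f s"
    unfolding hardy_mean_def using assms by (simp add: divide_le_eq mult.commute)
  have "0 \<le> integral {0..s} f"
    using assms zero f_mono[of 0] by (intro integral_nonneg int) auto
  then show "0 \<le> hardy_mean f s"
    unfolding hardy_mean_def using assms by simp
qed

lemma hardy_dev_bounds: "0 < s \<Longrightarrow> s \<le> b \<Longrightarrow> 0 \<le> hardy_dev f s \<and> hardy_dev f s \<le> f s"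
  using hardy_mean_bounds unfolding hardy_dev_def by auto

lemma hardy_mean_has_deriv:
  assumes "0 < s"
  shows "(hardy_mean f has_real_derivative hardy_dev f s / s) (at s)"
proof -
  have "((\<lambda>s. integral {0..s} f) has_real_derivative f s) (at s within {0..s + 1})"
    using assms by (intro integral_has_real_derivative f_continuous) auto
  then have "((\<lambda>s. integral {0..s} f) has_real_derivative f s) (at s)"
    using at_within_Icc_at[of 0 s "s + 1"] assms by simp
  then have "((\<lambda>s. integral {0..s} f / s) has_real_derivative (f s * s - integral {0..s} f * 1) / (s * s)) (at s)"
    using assms by (intro DERIV_divide DERIV_ident) auto
  moreover have "(f s * s - integral {0..s} f * 1) / (s * s) = hardy_dev f s / s"
    unfolding hardy_dev_def hardy_mean_def using assms by (simp add: field_simps)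
  ultimately show ?thesis
    unfolding hardy_mean_def[abs_def] by simp
qed

lemma hardy_dev_has_deriv:
  "0 < s \<Longrightarrow> (hardy_dev f has_real_derivative f' s - hardy_dev f s / s) (at s)"
  unfolding hardy_dev_def[abs_def] by (intro DERIV_diff has_deriv hardy_mean_has_deriv[unfolded hardy_dev_def])

lemma isCont_hardy_dev: "0 < s \<Longrightarrow> isCont (hardy_dev f) s"
  using hardy_dev_has_deriv DERIV_isCont by blast

lemma tendsto_hardy_mean: "(hardy_mean f \<longlongrightarrow> 0) (at_right 0)"
  and tendsto_hardy_dev: "(hardy_dev f \<longlongrightarrow> 0) (at_right 0)"
proof -
  have f_lim: "(f \<longlongrightarrow> 0) (at_right 0)"
    using f_continuous[of UNIV] zero by (metis continuous_on_def UNIV_I filterlim_at_split tendsto_within_subset)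
  have bounds: "\<forall>\<^sub>F s in at_right 0. 0 \<le> hardy_mean f s \<and> hardy_mean f s \<le> f s
      \<and> 0 \<le> hardy_dev f s \<and> hardy_dev f s \<le> f s"
    using hardy_mean_bounds hardy_dev_bounds pos by (intro eventually_at_rightI[of 0 b]) auto
  show "(hardy_mean f \<longlongrightarrow> 0) (at_right 0)" "(hardy_dev f \<longlongrightarrow> 0) (at_right 0)"
    by (rule tendsto_sandwich[OF _ _ tendsto_const f_lim]; use bounds in \<open>auto elim: eventually_mono\<close>)+
qed

lemma hardy_mean_measurable [measurable]: "hardy_mean f \<in> borel_measurable borel"
  and hardy_dev_measurable [measurable]: "hardy_dev f \<in> borel_measurable borel"
proof -
  have "continuous_on {0<..} (hardy_mean f)"
    using hardy_mean_has_deriv by (meson DERIV_isCont continuous_at_imp_continuous_on greaterThan_iff)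
  then have "(\<lambda>s. indicator {0<..} s *\<^sub>R hardy_mean f s) \<in> borel_measurable borel"
    by (intro borel_measurable_continuous_on_indicator) auto
  moreover have "(\<lambda>s. indicator {0<..} s *\<^sub>R hardy_mean f s) = hardy_mean f"
  proof
    fix s
    show "indicator {0<..} s *\<^sub>R hardy_mean f s = hardy_mean f s"
    proof (cases "0 < s")
      case False
      then have "s = 0 \<or> {0..s} = {}"
        by auto
      with False show ?thesis
        by (auto simp: hardy_mean_def)
    qed simp
  qed
  ultimately show "hardy_mean f \<in> borel_measurable borel"
    by simp
  then show "hardy_dev f \<in> borel_measurable borel"
    unfolding hardy_dev_def[abs_def] by measurable
qed

lemma hardy_mean_le_nn_integral:
  assumes "0 < x" "x \<le> b"
  shows "ennreal (hardy_mean f x) \<le> (\<integral>\<^sup>+ s\<in>{0<..x}. ennreal (hardy_dev f s / s) \<partial>lborel)"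
proof (rule ennreal_le_nn_integral_of_deriv_le[OF assms(1)])
  show "(hardy_mean f has_real_derivative hardy_dev f s / s) (at s)" if "0 < s" for s
    using hardy_mean_has_deriv that .
  show "0 \<le> hardy_dev f s / s" if "0 < s" "s \<le> x" for s
    using hardy_dev_bounds[of s] that assms by simp
  show "continuous_on {0<..x} (\<lambda>s. hardy_dev f s / s)"
    by (intro continuous_at_imp_continuous_on ballI continuous_intros isCont_hardy_dev) auto
qed (auto intro: tendsto_hardy_mean)

lemma hardy_dev_sq_le_nn_integral:
  assumes "0 < x" "x \<le> b"
  shows "ennreal ((hardy_dev f x)^2) \<le> 2 * (\<integral>\<^sup>+ s\<in>{0<..x}. ennreal (hardy_dev f s * f' s) \<partial>lborel)"
proof -
  have nonneg: "0 \<le> hardy_dev f s * f' s" if "0 < s" "s \<le> x" for s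
    using hardy_dev_bounds[of s] deriv_nonneg[of s] that assms by simp
  have "ennreal ((hardy_dev f x)^2) \<le> (\<integral>\<^sup>+ s\<in>{0<..x}. ennreal (2 * (hardy_dev f s * f' s)) \<partial>lborel)"
  proof (rule ennreal_le_nn_integral_of_deriv_le[OF assms(1)])
    show "((\<lambda>s. (hardy_dev f s)^2) has_real_derivative
        2 * hardy_dev f s * (f' s - hardy_dev f s / s)) (at s)" if "0 < s" for s
      using DERIV_power[OF hardy_dev_has_deriv[OF that], of 2] by (simp add: mult_ac)
    show "2 * hardy_dev f s * (f' s - hardy_dev f s / s) \<le> 2 * (hardy_dev f s * f' s)" if "0 < s" for s
      using that by (simp add: algebra_simps power2_eq_square[symmetric])
    show "continuous_on {0<..x} (\<lambda>s. 2 * (hardy_dev f s * f' s))"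
      using continuous_deriv
      by (intro continuous_at_imp_continuous_on ballI continuous_intros isCont_hardy_dev)
        (auto simp: continuous_on_eq_continuous_at)
    show "((\<lambda>s. (hardy_dev f s)^2) \<longlongrightarrow> 0) (at_right 0)"
      using tendsto_power[OF tendsto_hardy_dev, of 2] by simp
  qed (use nonneg in simp)
  also have "\<dots> = 2 * (\<integral>\<^sup>+ s\<in>{0<..x}. ennreal (hardy_dev f s * f' s) \<partial>lborel)"
    by (simp add: ennreal_mult' nn_integral_cmult mult.assoc)
  finally show ?thesis .
qed

lemma hardy_mean_sq_le_nn_integral:
  assumes x: "0 < x" "x \<le> b" and "0 < g"
  shows "ennreal ((hardy_mean f x)^2)
    \<le> ennreal (x powr g / g) * (\<integral>\<^sup>+ s\<in>{0<..x}. ennreal ((hardy_dev f s)^2 * s powr (-1-g)) \<partial>lborel)"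
proof -
  have "ennreal ((hardy_mean f x)^2) = ennreal (hardy_mean f x) ^ 2"
    using hardy_mean_bounds[OF x] by (simp add: ennreal_power)
  also have "\<dots> \<le> (\<integral>\<^sup>+ s\<in>{0<..x}. ennreal (hardy_dev f s / s) \<partial>lborel) ^ 2"
    by (intro power_mono hardy_mean_le_nn_integral[OF x]) auto
  also have "\<dots> \<le> ennreal (x powr g / g) * (\<integral>\<^sup>+ s\<in>{0<..x}. ennreal ((hardy_dev f s)^2 * s powr (-1-g)) \<partial>lborel)"
    using hardy_dev_bounds x \<open>0 < g\<close> by (intro nn_integral_div_sq_le) auto
  finally show ?thesis .
qed

lemma nn_integral_hardy_dev_sq_le:
  assumes "0 < \<sigma>"
  shows "(\<integral>\<^sup>+ x\<in>{0<..b}. ennreal ((hardy_dev f x)^2 / x powr (1 + \<sigma>)) \<partial>lborel)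
    \<le> ennreal (2/\<sigma>) * (\<integral>\<^sup>+ x\<in>{0<..b}. ennreal (hardy_dev f x * f' x / x powr \<sigma>) \<partial>lborel)"
proof -
  let ?T = "\<lambda>s. ennreal (hardy_dev f s * f' s)"
  have "(\<integral>\<^sup>+ x\<in>{0<..b}. ennreal ((hardy_dev f x)^2 / x powr (1 + \<sigma>)) \<partial>lborel)
      \<le> 2 * (ennreal (1/\<sigma>) * (\<integral>\<^sup>+ s\<in>{0<..b}. ?T s * ennreal (s powr (-\<sigma>)) \<partial>lborel))"
  proof (rule nn_integral_le_of_powr_primitive_bound)
    fix x assume x: "0 < x" "x \<le> b"
    have "(hardy_dev f x)^2 / x powr (1 + \<sigma>) = x powr (-1-\<sigma>) * (hardy_dev f x)^2"
      using powr_minus[of x "1 + \<sigma>"] by (simp add: divide_inverse mult.commute)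
    then have "ennreal ((hardy_dev f x)^2 / x powr (1 + \<sigma>))
        = ennreal (x powr (-1-\<sigma>)) * ennreal ((hardy_dev f x)^2)"
      by (simp add: ennreal_mult)
    also have "\<dots> \<le> ennreal (x powr (-1-\<sigma>)) * (2 * (\<integral>\<^sup>+ s\<in>{0<..x}. ?T s \<partial>lborel))"
      using x by (intro mult_left_mono hardy_dev_sq_le_nn_integral) auto
    finally show "ennreal ((hardy_dev f x)^2 / x powr (1 + \<sigma>))
        \<le> 2 * (ennreal (x powr (-1-\<sigma>)) * (\<integral>\<^sup>+ s\<in>{0<..x}. ?T s \<partial>lborel))"
      by (simp add: mult_ac)
  qed (use assms in auto)
  also have "(\<integral>\<^sup>+ s\<in>{0<..b}. ?T s * ennreal (s powr (-\<sigma>)) \<partial>lborel)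
      = (\<integral>\<^sup>+ s\<in>{0<..b}. ennreal (hardy_dev f s * f' s / s powr \<sigma>) \<partial>lborel)"
  proof (intro nn_integral_cong)
    fix s
    show "?T s * ennreal (s powr (-\<sigma>)) * indicator {0<..b} s
      = ennreal (hardy_dev f s * f' s / s powr \<sigma>) * indicator {0<..b} s"
    proof (cases "s \<in> {0<..b}")
      case True
      then have "0 \<le> hardy_dev f s * f' s"
        using hardy_dev_bounds[of s] deriv_nonneg[of s] by simp
      then have "?T s * ennreal (s powr (-\<sigma>)) = ennreal (hardy_dev f s * f' s * s powr (-\<sigma>))"
        by (intro ennreal_mult[symmetric]) auto
      with True show ?thesis
        by (simp add: powr_minus_divide)
    qed simp
  qed
  also have "2 * (ennreal (1/\<sigma>) * X) = ennreal (2/\<sigma>) * X" for X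
    using ennreal_mult[of 2 "1/\<sigma>"] assms by (simp add: mult.assoc[symmetric])
  finally show ?thesis .
qed

lemma hardy_mean_sq_div_powr_le:
  assumes x: "0 < x" "x \<le> b" and "0 < \<sigma>"
  shows "ennreal ((hardy_mean f x)^2 / x powr (1 + \<sigma>)) \<le> ennreal (2/\<sigma>) *
    (ennreal (x powr (-1-\<sigma>/2)) * (\<integral>\<^sup>+ s\<in>{0<..x}. ennreal ((hardy_dev f s)^2 * s powr (-1-\<sigma>/2)) \<partial>lborel))"
proof -
  let ?I = "\<integral>\<^sup>+ s\<in>{0<..x}. ennreal ((hardy_dev f s)^2 * s powr (-1-\<sigma>/2)) \<partial>lborel"
  have "-1-\<sigma> + \<sigma>/2 = -1-\<sigma>/2"
    by simp
  then have "x powr (-1-\<sigma>) * x powr (\<sigma>/2) = x powr (-1-\<sigma>/2)"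
    by (simp only: powr_add[symmetric])
  then have "x powr (-1-\<sigma>) * (x powr (\<sigma>/2) / (\<sigma>/2)) = 2/\<sigma> * x powr (-1-\<sigma>/2)"
    by simp
  then have w: "ennreal (x powr (-1-\<sigma>)) * ennreal (x powr (\<sigma>/2) / (\<sigma>/2)) = ennreal (2/\<sigma>) * ennreal (x powr (-1-\<sigma>/2))"
    using \<open>0 < \<sigma>\<close> by (simp add: ennreal_mult[symmetric])
  have "(hardy_mean f x)^2 / x powr (1 + \<sigma>) = x powr (-1-\<sigma>) * (hardy_mean f x)^2"
    using powr_minus[of x "1 + \<sigma>"] by (simp add: divide_inverse mult.commute)
  then have "ennreal ((hardy_mean f x)^2 / x powr (1 + \<sigma>)) = ennreal (x powr (-1-\<sigma>)) * ennreal ((hardy_mean f x)^2)"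
    by (simp add: ennreal_mult)
  also have "\<dots> \<le> ennreal (x powr (-1-\<sigma>)) * (ennreal (x powr (\<sigma>/2) / (\<sigma>/2)) * ?I)"
    using x \<open>0 < \<sigma>\<close> by (intro mult_left_mono hardy_mean_sq_le_nn_integral) auto
  also have "\<dots> = ennreal (2/\<sigma>) * (ennreal (x powr (-1-\<sigma>/2)) * ?I)"
    using w by (simp only: mult.assoc[symmetric])
  finally show ?thesis .
qed

lemma nn_integral_hardy_mean_sq_le:
  assumes "0 < \<sigma>"
  shows "(\<integral>\<^sup>+ x\<in>{0<..b}. ennreal ((hardy_mean f x)^2 / x powr (1 + \<sigma>)) \<partial>lborel)
    \<le> ennreal (4/\<sigma>^2) * (\<integral>\<^sup>+ x\<in>{0<..b}. ennreal ((hardy_dev f x)^2 / x powr (1 + \<sigma>)) \<partial>lborel)"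
proof -
  define g where "g = \<sigma> / 2"
  let ?F = "\<lambda>s. ennreal ((hardy_dev f s)^2 * s powr (-1-g))"
  have "(\<integral>\<^sup>+ x\<in>{0<..b}. ennreal ((hardy_mean f x)^2 / x powr (1 + \<sigma>)) \<partial>lborel)
      \<le> ennreal (2/\<sigma>) * (ennreal (1/g) * (\<integral>\<^sup>+ s\<in>{0<..b}. ?F s * ennreal (s powr (-g)) \<partial>lborel))"
  proof (rule nn_integral_le_of_powr_primitive_bound)
    show "ennreal ((hardy_mean f x)^2 / x powr (1 + \<sigma>))
      \<le> ennreal (2/\<sigma>) * (ennreal (x powr (-1-g)) * (\<integral>\<^sup>+ s\<in>{0<..x}. ?F s \<partial>lborel))"
      if "0 < x" "x \<le> b" for x
      unfolding g_def by (rule hardy_mean_sq_div_powr_le[OF that assms])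
    show "0 < g"
      unfolding g_def using assms by simp
  qed measurable
  also have "(\<integral>\<^sup>+ s\<in>{0<..b}. ?F s * ennreal (s powr (-g)) \<partial>lborel)
      = (\<integral>\<^sup>+ s\<in>{0<..b}. ennreal ((hardy_dev f s)^2 / s powr (1 + \<sigma>)) \<partial>lborel)"
  proof (intro nn_integral_cong)
    fix s
    have "-1-g + -g = -(1 + \<sigma>)"
      unfolding g_def by simp
    then have "s powr (-1-g) * s powr (-g) = s powr (-(1 + \<sigma>))"
      by (simp only: powr_add[symmetric])
    also have "\<dots> = inverse (s powr (1 + \<sigma>))"
      by (rule powr_minus)
    finally have eq: "(hardy_dev f s)^2 * s powr (-1-g) * s powr (-g) = (hardy_dev f s)^2 / s powr (1 + \<sigma>)"
      by (simp add: divide_inverse mult.assoc)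
    have "?F s * ennreal (s powr (-g)) = ennreal ((hardy_dev f s)^2 * s powr (-1-g) * s powr (-g))"
      by (intro ennreal_mult[symmetric]) auto
    then show "?F s * ennreal (s powr (-g)) * indicator {0<..b} s
      = ennreal ((hardy_dev f s)^2 / s powr (1 + \<sigma>)) * indicator {0<..b} s"
      unfolding eq by simp
  qed
  also have "ennreal (2/\<sigma>) * (ennreal (1/g) * X) = ennreal (4/\<sigma>^2) * X" for X
  proof -
    have "ennreal (2/\<sigma>) * ennreal (1/g) = ennreal (4/\<sigma>^2)"
      using assms by (subst ennreal_mult[symmetric]) (auto simp: g_def power2_eq_square)
    then show ?thesis
      by (simp only: mult.assoc[symmetric])
  qed
  finally show ?thesis .
qed

lemma nn_integral_sq_le_mean_dev:
  "(\<integral>\<^sup>+ x\<in>{0<..b}. ennreal ((f x)^2 / x powr (1 + \<sigma>)) \<partial>lborel)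
    \<le> 2 * (\<integral>\<^sup>+ x\<in>{0<..b}. ennreal ((hardy_mean f x)^2 / x powr (1 + \<sigma>)) \<partial>lborel)
      + 2 * (\<integral>\<^sup>+ x\<in>{0<..b}. ennreal ((hardy_dev f x)^2 / x powr (1 + \<sigma>)) \<partial>lborel)"
proof -
  let ?w = "\<lambda>h x. ennreal ((h x)^2 / x powr (1 + \<sigma>)) * indicator {0<..b} x"
  have "?w f x \<le> 2 * ?w (hardy_mean f) x + 2 * ?w (hardy_dev f) x" for x
  proof -
    let ?a = "(hardy_mean f x)^2 / x powr (1 + \<sigma>)" and ?b = "(hardy_dev f x)^2 / x powr (1 + \<sigma>)"
    have sq: "(f x)^2 \<le> 2 * (hardy_mean f x)^2 + 2 * (hardy_dev f x)^2"
      using sum_squares_ge_zero[of "hardy_mean f x - hardy_dev f x" 0]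
      unfolding hardy_dev_def by (simp add: power2_eq_square algebra_simps)
    have "(f x)^2 / x powr (1 + \<sigma>) \<le> 2 * ?a + 2 * ?b"
      using divide_right_mono[OF sq, of "x powr (1 + \<sigma>)"] by (simp add: add_divide_distrib)
    then have "ennreal ((f x)^2 / x powr (1 + \<sigma>)) \<le> ennreal (2 * ?a + 2 * ?b)"
      by (rule ennreal_leI)
    also have "\<dots> = 2 * ennreal ?a + 2 * ennreal ?b"
      using ennreal_plus[of "2 * ?a" "2 * ?b"] ennreal_mult'[of 2 ?a] ennreal_mult'[of 2 ?b] by simp
    finally show ?thesis
      by (simp split: split_indicator)
  qed
  then have "(\<integral>\<^sup>+ x. ?w f x \<partial>lborel) \<le> (\<integral>\<^sup>+ x. 2 * ?w (hardy_mean f) x + 2 * ?w (hardy_dev f) x \<partial>lborel)"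
    by (intro nn_integral_mono)
  also have "\<dots> = 2 * (\<integral>\<^sup>+ x. ?w (hardy_mean f) x \<partial>lborel) + 2 * (\<integral>\<^sup>+ x. ?w (hardy_dev f) x \<partial>lborel)"
    by (subst nn_integral_add) (auto simp: nn_integral_cmult)
  finally show ?thesis .
qed

theorem hardy_inequality:
  assumes "0 < \<sigma>"
  shows "(\<integral>\<^sup>+ x\<in>{0<..b}. ennreal ((f x)^2 / x powr (1 + \<sigma>)) \<partial>lborel)
    \<le> ennreal ((8/\<sigma>^2 + 2) * (2/\<sigma>)) * (\<integral>\<^sup>+ x\<in>{0<..b}. ennreal (hardy_dev f x * f' x / x powr \<sigma>) \<partial>lborel)"
proof -
  let ?U = "\<integral>\<^sup>+ x\<in>{0<..b}. ennreal ((hardy_dev f x)^2 / x powr (1 + \<sigma>)) \<partial>lborel"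
  let ?T = "\<integral>\<^sup>+ x\<in>{0<..b}. ennreal (hardy_dev f x * f' x / x powr \<sigma>) \<partial>lborel"
  have "(\<integral>\<^sup>+ x\<in>{0<..b}. ennreal ((f x)^2 / x powr (1 + \<sigma>)) \<partial>lborel)
      \<le> 2 * (\<integral>\<^sup>+ x\<in>{0<..b}. ennreal ((hardy_mean f x)^2 / x powr (1 + \<sigma>)) \<partial>lborel) + 2 * ?U"
    by (rule nn_integral_sq_le_mean_dev)
  also have "\<dots> \<le> 2 * (ennreal (4/\<sigma>^2) * ?U) + 2 * ?U"
    using nn_integral_hardy_mean_sq_le[OF assms] by (intro add_mono mult_left_mono) auto
  also have "\<dots> = ennreal (8/\<sigma>^2 + 2) * ?U"
  proof -
    have c: "2 * ennreal (4/\<sigma>^2) + 2 = ennreal (8/\<sigma>^2 + 2)"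
      using ennreal_plus[of "8/\<sigma>^2" 2] ennreal_mult'[of 2 "4/\<sigma>^2"] by simp
    show ?thesis
      by (simp only: distrib_right mult.assoc flip: c)
  qed
  also have "\<dots> \<le> ennreal (8/\<sigma>^2 + 2) * (ennreal (2/\<sigma>) * ?T)"
    using nn_integral_hardy_dev_sq_le[OF assms] by (intro mult_left_mono) auto
  also have "\<dots> = ennreal ((8/\<sigma>^2 + 2) * (2/\<sigma>)) * ?T"
    using assms ennreal_mult[of "8/\<sigma>^2 + 2" "2/\<sigma>"] by (simp only: mult.assoc[symmetric]) simp
  finally show ?thesis .
qed

end

lemma nn_integral_parts_ge_of_pointwise_ge:
  fixes g h :: "'a \<Rightarrow> real" and R :: ennreal
  assumes ge: "\<And>x. x \<in> A \<Longrightarrow> c * h x \<le> g x" and h_nonneg: "\<And>x. x \<in> A \<Longrightarrow> 0 \<le> h x"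
    and "0 < c" "0 < K" and [measurable]: "h \<in> borel_measurable M" "A \<in> sets M"
    and R: "R \<le> ennreal K * (\<integral>\<^sup>+ x\<in>A. ennreal (h x) \<partial>M)"
  shows "(\<integral>\<^sup>+ x\<in>A. ennreal (max 0 (- g x)) \<partial>M) < \<infinity> \<and>
    ereal (c / K) * enn2ereal R
      \<le> enn2ereal (\<integral>\<^sup>+ x\<in>A. ennreal (max 0 (g x)) \<partial>M) - enn2ereal (\<integral>\<^sup>+ x\<in>A. ennreal (max 0 (- g x)) \<partial>M)"
proof -
  have g_nonneg: "0 \<le> g x" if "x \<in> A" for x
    using ge[OF that] h_nonneg[OF that] \<open>0 < c\<close> by (meson mult_nonneg_nonneg less_imp_le order_trans)
  then have neg: "(\<integral>\<^sup>+ x\<in>A. ennreal (max 0 (- g x)) \<partial>M) = 0"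
    by (intro nn_integral_zero') (auto split: split_indicator)
  have "ennreal (c / K) * R \<le> ennreal (c / K) * (ennreal K * (\<integral>\<^sup>+ x\<in>A. ennreal (h x) \<partial>M))"
    by (intro mult_left_mono R) auto
  also have "\<dots> = ennreal c * (\<integral>\<^sup>+ x\<in>A. ennreal (h x) \<partial>M)"
    using \<open>0 < c\<close> \<open>0 < K\<close> by (simp add: mult.assoc[symmetric] ennreal_mult[symmetric])
  also have "\<dots> = (\<integral>\<^sup>+ x. ennreal c * (ennreal (h x) * indicator A x) \<partial>M)"
    by (rule nn_integral_cmult[symmetric]) measurable
  also have "\<dots> \<le> (\<integral>\<^sup>+ x\<in>A. ennreal (max 0 (g x)) \<partial>M)"
    using ge h_nonneg \<open>0 < c\<close>
    by (intro nn_integral_mono) (auto simp: ennreal_mult[symmetric] le_max_iff_disj split: split_indicator)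
  finally have "ennreal (c / K) * R \<le> (\<integral>\<^sup>+ x\<in>A. ennreal (max 0 (g x)) \<partial>M)" .
  then have "ereal (c / K) * enn2ereal R \<le> enn2ereal (\<integral>\<^sup>+ x\<in>A. ennreal (max 0 (g x)) \<partial>M)"
    using \<open>0 < c\<close> \<open>0 < K\<close> by (simp add: times_ennreal.rep_eq less_eq_ennreal.rep_eq)
  with neg show ?thesis
    by (simp add: zero_ennreal.rep_eq)
qed

lemma smooth_periodic_nondecreasing_from_zero:
  assumes "smooth_periodic f" "f 0 = 0" "\<And>t. 0 \<le> t \<Longrightarrow> t < pi \<Longrightarrow> 0 \<le> deriv f t"
  shows "nondecreasing_from_zero f (deriv f) (pi/2)"
proof
  show "0 \<le> deriv f t" if "0 \<le> t" "t \<le> pi/2" for t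
    using that pi_gt_zero by (intro assms(3)) linarith+
qed (use assms smooth_periodic_has_deriv smooth_periodic_continuous_deriv in auto)

lemma neg_Hop_mult_deriv_ge:
  assumes "a > 0"
    and f: "smooth_periodic f" "\<And>x. f (- x) = f x" "f 0 = 0" "\<And>t. 0 \<le> t \<Longrightarrow> t < pi \<Longrightarrow> 0 \<le> deriv f t"
    and x: "0 < x" "x \<le> pi/2"
  shows "a^2 / (2*pi*(4 + a^2)) * (hardy_dev f x * deriv f x / x powr \<sigma>) \<le> - (Hop a f x * deriv f x) / x powr \<sigma>"
    and "0 \<le> hardy_dev f x * deriv f x / x powr \<sigma>"
proof -
  interpret nondecreasing_from_zero f "deriv f" "pi/2"
    using smooth_periodic_nondecreasing_from_zero[OF f(1,3,4)] .
  have per: "\<And>t. f (t + 2*pi) = f t"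
    using f(1) unfolding smooth_periodic_def by blast
  obtain L where lip: "L-lipschitz_on UNIV f"
    using smooth_periodic_lipschitz[OF f(1)] .
  have mono: "mono_on {0..pi} f"
    using f(4) by (intro mono_on_of_deriv_nonneg[OF smooth_periodic_has_deriv[OF f(1)]]) auto
  have nonneg: "0 \<le> deriv f x" "0 \<le> hardy_dev f x"
    using x hardy_dev_bounds[of x] f(4)[of x] by auto
  then have "a^2 / (2*pi*(4 + a^2)) * hardy_dev f x * deriv f x \<le> - Hop a f x * deriv f x"
    using neg_Hop_ge_hardy_dev[OF lip per f(2) mono assms(1) x] by (intro mult_right_mono) auto
  from divide_right_mono[OF this, of "x powr \<sigma>"]
  show "a^2 / (2*pi*(4 + a^2)) * (hardy_dev f x * deriv f x / x powr \<sigma>) \<le> - (Hop a f x * deriv f x) / x powr \<sigma>"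
    by (simp add: mult.assoc)
  show "0 \<le> hardy_dev f x * deriv f x / x powr \<sigma>"
    using nonneg by simp
qed

theorem proposition4p3:
  fixes a \<sigma> :: real
  assumes "a > 0" and "\<sigma> > 0"
  shows "\<exists>C>0. \<forall>f :: real \<Rightarrow> real.
     smooth_periodic f \<and> (\<forall>x. f (- x) = f x) \<and> (\<forall>x. f x \<ge> 0) \<and> f 0 = 0 \<and>
     (\<forall>x\<in>{0..<pi}. deriv f x \<ge> 0)
     \<longrightarrow>
     (let g = (\<lambda>x. - (Hop a f x * deriv f x) / x powr \<sigma>);
          LHSpos = (\<integral>\<^sup>+ x\<in>{0<..pi/2}. ennreal (max 0 (g x)) \<partial>lborel);
          LHSneg = (\<integral>\<^sup>+ x\<in>{0<..pi/2}. ennreal (max 0 (- g x)) \<partial>lborel);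
          RHS = (\<integral>\<^sup>+ x\<in>{0<..pi/2}. ennreal ((f x)^2 / x powr (1 + \<sigma>)) \<partial>lborel)
      in LHSneg < \<infinity> \<and>
         ereal C * enn2ereal RHS \<le> enn2ereal LHSpos - enn2ereal LHSneg)"
proof -
  define c where "c = a^2 / (2*pi*(4 + a^2))"
  define K where "K = (8/\<sigma>^2 + 2) * (2/\<sigma>)"
  have "0 < c" "0 < K"
    using assms unfolding c_def K_def by (auto intro!: divide_pos_pos mult_pos_pos add_nonneg_pos)
  show ?thesis
  proof (intro exI[of _ "c / K"] conjI allI impI, goal_cases)
    case 1
    show ?case
      using \<open>0 < c\<close> \<open>0 < K\<close> by simp
  next
    case (2 f)
    then have f: "smooth_periodic f" "\<And>x. f (- x) = f x" "f 0 = 0"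
      "\<And>t. 0 \<le> t \<Longrightarrow> t < pi \<Longrightarrow> 0 \<le> deriv f t"
      by auto
    interpret nondecreasing_from_zero f "deriv f" "pi/2"
      using smooth_periodic_nondecreasing_from_zero[OF f(1,3,4)] .
    have "(\<lambda>x. hardy_dev f x * deriv f x / x powr \<sigma>) \<in> borel_measurable borel"
      by measurable
    then show ?case
      unfolding Let_def
      using neg_Hop_mult_deriv_ge[OF assms(1) f] \<open>0 < c\<close> \<open>0 < K\<close> hardy_inequality[OF assms(2)]
      by (intro nn_integral_parts_ge_of_pointwise_ge) (auto simp: c_def K_def)
  qed
qed

end
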